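(* In the dense network described in the context, for every arbitrarily small constant $\epsilon_1>0$, with high probability the minimum distance between any two nodes, and between any node and any antenna on a base-station boundary, is larger than $1/n^{1+\epsilon_1}$.
   Context: Dense network: a square of area $1$ partitioned into $m=n^{\beta}$ equal square cells ($\beta\in[0,1)$), each with a base station (BS) at its center occupying a disk of radius $\epsilon_0/\sqrt{m}$ ($\epsilon_0>0$ an arbitrarily small constant independent of $n$). Each BS has $l=n^{\gamma}$ antennas ($\gamma\in[0,1)$, $\beta+\gamma\le 1$, so $ml=O(n)$); antennas on the BS boundary are regularly spaced on the boundary circle (all $l$ of them if $l=O(\sqrt{n/m})$, otherwise $\sqrt{n/m}$ of them with the rest inside). $n$ nodes are placed independently and uniformly at random in the square minus the BS disks. "With high probability" means with probability tending to $1$ as $n\to\infty$. *)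

theory Defs
  imports "HOL-Probability.Probability"
begin

text \<open>For n nodes: m = n^beta cells, realised as k^2 cells with
 k = max 1 (floor (n^(beta/2))) cells per side; l = max 1 (floor (n^gamma)) antennas per BS.\<close>

definition cells_side :: "real \<Rightarrow> nat \<Rightarrow> nat" where
  "cells_side \<beta> n = max 1 (nat \<lfloor>real n powr (\<beta> / 2)\<rfloor>)"

definition num_antennas :: "real \<Rightarrow> nat \<Rightarrow> nat" where
  "num_antennas \<gamma> n = max 1 (nat \<lfloor>real n powr \<gamma>\<rfloor>)"

text \<open>Number of antennas placed on the boundary circle of each BS: all l of them if
 l = O(sqrt(n/m)) (i.e. gamma \<le> (1-beta)/2), otherwise sqrt(n/m) of them.\<close>
definition num_boundary_antennas :: "real \<Rightarrow> real \<Rightarrow> nat \<Rightarrow> nat" where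
  "num_boundary_antennas \<beta> \<gamma> n =
     (if \<gamma> \<le> (1 - \<beta>) / 2 then num_antennas \<gamma> n
      else nat \<lfloor>sqrt (real n / real ((cells_side \<beta> n)\<^sup>2))\<rfloor>)"

definition cells :: "nat \<Rightarrow> (nat \<times> nat) set" where
  "cells k = {..<k} \<times> {..<k}"

definition bs_center :: "nat \<Rightarrow> nat \<times> nat \<Rightarrow> real \<times> real" where
  "bs_center k c = ((2 * real (fst c) + 1) / (2 * real k), (2 * real (snd c) + 1) / (2 * real k))"

text \<open>BS disk radius eps0 / sqrt m = eps0 / k.\<close>
definition bs_radius :: "real \<Rightarrow> real \<Rightarrow> nat \<Rightarrow> real" where
  "bs_radius \<beta> \<epsilon>0 n = \<epsilon>0 / real (cells_side \<beta> n)"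

definition node_region :: "real \<Rightarrow> real \<Rightarrow> nat \<Rightarrow> (real \<times> real) set" where
  "node_region \<beta> \<epsilon>0 n =
     cbox (0, 0) (1, 1) - (\<Union>c\<in>cells (cells_side \<beta> n). cball (bs_center (cells_side \<beta> n) c) (bs_radius \<beta> \<epsilon>0 n))"

text \<open>Antennas regularly spaced on the boundary circle of each BS; the rotation offset
 theta n c of BS c is arbitrary.\<close>
definition boundary_antennas ::
  "real \<Rightarrow> real \<Rightarrow> real \<Rightarrow> (nat \<Rightarrow> nat \<times> nat \<Rightarrow> real) \<Rightarrow> nat \<Rightarrow> (real \<times> real) set" where
  "boundary_antennas \<beta> \<gamma> \<epsilon>0 \<theta> n =
     {bs_center (cells_side \<beta> n) c + bs_radius \<beta> \<epsilon>0 n *\<^sub>R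
        (cos (\<theta> n c + 2 * pi * real t / real (num_boundary_antennas \<beta> \<gamma> n)),
         sin (\<theta> n c + 2 * pi * real t / real (num_boundary_antennas \<beta> \<gamma> n)))
      | c t. c \<in> cells (cells_side \<beta> n) \<and> t < num_boundary_antennas \<beta> \<gamma> n}"

definition nodes_law :: "real \<Rightarrow> real \<Rightarrow> nat \<Rightarrow> (nat \<Rightarrow> real \<times> real) measure" where
  "nodes_law \<beta> \<epsilon>0 n = PiM {..<n} (\<lambda>_. uniform_measure lborel (node_region \<beta> \<epsilon>0 n))"

definition good_event ::
  "real \<Rightarrow> real \<Rightarrow> real \<Rightarrow> real \<Rightarrow> (nat \<Rightarrow> nat \<times> nat \<Rightarrow> real) \<Rightarrow> nat \<Rightarrow> (nat \<Rightarrow> real \<times> real) set" where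
  "good_event \<beta> \<gamma> \<epsilon>0 \<epsilon>1 \<theta> n =
     {x \<in> space (nodes_law \<beta> \<epsilon>0 n).
        (\<forall>i<n. \<forall>j<n. i \<noteq> j \<longrightarrow> dist (x i) (x j) > 1 / real n powr (1 + \<epsilon>1)) \<and>
        (\<forall>i<n. \<forall>a\<in>boundary_antennas \<beta> \<gamma> \<epsilon>0 \<theta> n. dist (x i) a > 1 / real n powr (1 + \<epsilon>1))}"

end

theory Submission
  imports Defs "HOL-Real_Asymp.Real_Asymp"
begin

text \<open>A node lies within distance r of a given point with probability at most
  4 r^2 / (1 - 4 eps0^2), since the BS disks remove at most an area 4 eps0^2 from the unit
  square; by independence the same bound holds for two given nodes being that close.
  There are fewer than n^2 node pairs and, because m l <= n, at most n^2 node/antenna pairs,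
  so by the union bound the failure probability is O(n^2 r^2) = O(n^(-2 eps1)) for
  r = 1/n^(1+eps1).\<close>

lemma cball_subset_cbox_prod:
  fixes a :: "real \<times> real"
  shows "cball a r \<subseteq> cbox (a - (r, r)) (a + (r, r))"
proof
  fix x assume "x \<in> cball a r"
  then have "dist a x \<le> r" by simp
  moreover have "dist (fst a) (fst x) \<le> dist a x" "dist (snd a) (snd x) \<le> dist a x"
    by (simp_all add: dist_fst_le dist_snd_le)
  ultimately show "x \<in> cbox (a - (r, r)) (a + (r, r))"
    by (cases a, cases x) (auto simp: cbox_Pair_iff dist_real_def abs_le_iff)
qed

lemma measure_lborel_cball_le:
  fixes a :: "real \<times> real"
  assumes "0 \<le> r"
  shows "measure lborel (cball a r) \<le> 4 * r\<^sup>2"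
proof -
  have "measure lborel (cball a r) \<le> measure lborel (cbox (a - (r, r)) (a + (r, r)))"
    by (rule measure_mono_fmeasurable[OF cball_subset_cbox_prod])
       (auto intro: fmeasurableI simp: emeasure_lborel_cbox_finite)
  also have "\<dots> = 4 * r\<^sup>2"
    using assms by (cases a) (simp add: content_Pair power2_eq_square)
  finally show ?thesis .
qed

lemma bs_disks_compact: "compact (\<Union>c\<in>cells k. cball (bs_center k c) \<rho>)"
  unfolding cells_def by (intro compact_UN) auto

lemma measure_bs_disks_le:
  assumes "0 \<le> \<epsilon>0"
  shows "measure lborel (\<Union>c\<in>cells (cells_side \<beta> n). cball (bs_center (cells_side \<beta> n) c) (bs_radius \<beta> \<epsilon>0 n))
           \<le> 4 * \<epsilon>0\<^sup>2"
proof -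
  define k where "k = cells_side \<beta> n"
  have k: "k \<ge> 1" unfolding k_def cells_side_def by simp
  have "measure lborel (\<Union>c\<in>cells k. cball (bs_center k c) (\<epsilon>0 / k))
          \<le> (\<Sum>c\<in>cells k. measure lborel (cball (bs_center k c) (\<epsilon>0 / k)))"
    by (intro measure_UNION_le) (auto simp: cells_def)
  also have "\<dots> \<le> (\<Sum>c\<in>cells k. 4 * (\<epsilon>0 / k)\<^sup>2)"
    using assms by (intro sum_mono measure_lborel_cball_le) simp
  also have "\<dots> = 4 * \<epsilon>0\<^sup>2"
    using k by (simp add: cells_def power2_eq_square field_simps)
  finally show ?thesis
    by (simp add: k_def bs_radius_def)
qed

lemma node_region_fmeasurable: "node_region \<beta> \<epsilon>0 n \<in> fmeasurable lborel"
  unfolding node_region_def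
  by (intro fmeasurable_Diff fmeasurable_compact compact_cbox) (auto intro: borel_compact bs_disks_compact)

lemma measure_node_region_ge:
  assumes "0 \<le> \<epsilon>0"
  shows "1 - 4 * \<epsilon>0\<^sup>2 \<le> measure lborel (node_region \<beta> \<epsilon>0 n)"
proof -
  define U where "U = (\<Union>c\<in>cells (cells_side \<beta> n). cball (bs_center (cells_side \<beta> n) c) (bs_radius \<beta> \<epsilon>0 n))"
  have U: "U \<in> fmeasurable lborel"
    unfolding U_def by (intro fmeasurable_compact bs_disks_compact)
  have "1 = measure lborel (cbox (0::real, 0::real) (1, 1))"
    by (simp add: content_Pair)
  also have "\<dots> \<le> measure lborel (node_region \<beta> \<epsilon>0 n \<union> U)"
    using U node_region_fmeasurable[of \<beta> \<epsilon>0 n]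
    by (intro measure_mono_fmeasurable) (auto simp: node_region_def U_def)
  also have "\<dots> \<le> measure lborel (node_region \<beta> \<epsilon>0 n) + measure lborel U"
    using U node_region_fmeasurable[of \<beta> \<epsilon>0 n] by (intro measure_Un_le) auto
  finally show ?thesis
    using measure_bs_disks_le[OF assms, of \<beta> n] by (simp add: U_def)
qed

lemma prob_space_uniform_measure_fmeasurable:
  assumes "R \<in> fmeasurable M" "0 < measure M R"
  shows "prob_space (uniform_measure M R)"
  using assms by (intro prob_space_uniform_measure) (auto simp: fmeasurable_def measure_def)

lemma measure_uniform_cball_le:
  fixes R :: "(real \<times> real) set"
  assumes R: "R \<in> fmeasurable lborel" and c: "0 < c" "c \<le> measure lborel R" and "0 \<le> r"
  shows "measure (uniform_measure lborel R) (cball a r) \<le> 4 * r\<^sup>2 / c"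
proof -
  have "measure (uniform_measure lborel R) (cball a r) = measure lborel (R \<inter> cball a r) / measure lborel R"
    using R c by (intro measure_uniform_measure) (auto simp: fmeasurable_def measure_def)
  also have "\<dots> \<le> measure lborel (cball a r) / measure lborel R"
    using R by (intro divide_right_mono measure_mono_fmeasurable) (auto intro: fmeasurable_compact)
  also have "\<dots> \<le> 4 * r\<^sup>2 / c"
    using c \<open>0 \<le> r\<close> by (intro frac_le measure_lborel_cball_le) auto
  finally show ?thesis .
qed

lemma distr_PiM_pair_coordinates:
  assumes "prob_space M" "i \<in> I" "j \<in> I" "i \<noteq> j"
  shows "distr (PiM I (\<lambda>_. M)) (M \<Otimes>\<^sub>M M) (\<lambda>x. (x i, x j)) = M \<Otimes>\<^sub>M M"
proof -
  interpret M: prob_space M by fact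
  let ?P = "PiM I (\<lambda>_. M)" and ?B = "PiM UNIV (\<lambda>_::bool. M)"
  define f where "f = (\<lambda>b::bool. if b then i else j)"
  have reindex: "(\<lambda>x. \<lambda>b\<in>UNIV. x (f b)) \<in> measurable ?P ?B"
    using assms unfolding f_def by (intro measurable_restrict) auto
  have swap: "(\<lambda>x. (x True, x False)) \<in> measurable ?B (M \<Otimes>\<^sub>M M)"
    by measurable
  have "distr ?P ?B (\<lambda>x. \<lambda>b\<in>UNIV. x (f b)) = ?B"
    using distr_PiM_reindex[of I "\<lambda>_. M" f UNIV] assms unfolding f_def inj_on_def by auto
  moreover have "case_bool M M = (\<lambda>_. M)"
    by (rule ext) (simp split: bool.split)
  then have "M \<Otimes>\<^sub>M M = distr ?B (M \<Otimes>\<^sub>M M) (\<lambda>x. (x True, x False))"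
    using pair_measure_eq_distr_PiM[of M M] M.sigma_finite_measure_axioms by simp
  ultimately have "M \<Otimes>\<^sub>M M = distr ?P (M \<Otimes>\<^sub>M M) ((\<lambda>x. (x True, x False)) \<circ> (\<lambda>x. \<lambda>b\<in>UNIV. x (f b)))"
    using distr_distr[OF swap reindex] by simp
  also have "(\<lambda>x. (x True, x False)) \<circ> (\<lambda>x. \<lambda>b\<in>UNIV. x (f b)) = (\<lambda>x. (x i, x j))"
    unfolding f_def by (auto simp: fun_eq_iff)
  finally show ?thesis by simp
qed

lemma measure_PiM_dist_coordinates_le:
  fixes M :: "'a :: {metric_space, second_countable_topology} measure"
  assumes M: "prob_space M" "sets M = sets borel"
    and ball: "\<And>a. measure M (cball a r) \<le> q"
    and ij: "i \<in> I" "j \<in> I" "i \<noteq> j"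
  shows "measure (PiM I (\<lambda>_. M)) {x \<in> space (PiM I (\<lambda>_. M)). dist (x i) (x j) \<le> r} \<le> q"
proof -
  interpret M: prob_space M by fact
  interpret MM: pair_prob_space M M ..
  let ?P = "PiM I (\<lambda>_. M)"
  define D where "D = {p :: 'a \<times> 'a. dist (fst p) (snd p) \<le> r}"
  have "closed D"
    unfolding D_def by (intro closed_Collect_le continuous_intros)
  then have "D \<in> sets borel" by auto
  then have D: "D \<in> sets (M \<Otimes>\<^sub>M M)"
    using sets_pair_measure_cong[OF M(2) M(2)] by (simp only: borel_prod)
  have coords: "(\<lambda>x. (x i, x j)) \<in> measurable ?P (M \<Otimes>\<^sub>M M)"
    using ij by measurable
  have "measure ?P {x \<in> space ?P. dist (x i) (x j) \<le> r} = measure ?P ((\<lambda>x. (x i, x j)) -` D \<inter> space ?P)"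
    unfolding D_def by (intro arg_cong[where f="measure ?P"]) auto
  also have "\<dots> = measure (M \<Otimes>\<^sub>M M) D"
    using measure_distr[OF coords D] distr_PiM_pair_coordinates[OF M(1) ij] by simp
  also have "\<dots> \<le> q"
  proof -
    have q: "0 \<le> q" using ball[of undefined] measure_nonneg order_trans by blast
    have "emeasure (M \<Otimes>\<^sub>M M) D = (\<integral>\<^sup>+x. emeasure M (Pair x -` D) \<partial>M)"
      by (rule M.emeasure_pair_measure_alt[OF D])
    also have "\<dots> \<le> (\<integral>\<^sup>+x. ennreal q \<partial>M)"
    proof (intro nn_integral_mono)
      fix x
      have "Pair x -` D = cball x r" unfolding D_def by (auto simp: cball_def)
      then show "emeasure M (Pair x -` D) \<le> ennreal q"
        using ball[of x] by (simp add: M.emeasure_eq_measure ennreal_leI)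
    qed
    also have "\<dots> = ennreal q" by (simp add: M.emeasure_space_1)
    finally show ?thesis
      using q by (simp add: MM.emeasure_eq_measure)
  qed
  finally show ?thesis .
qed

lemma measure_PiM_dist_coordinate_le:
  fixes M :: "'a :: metric_space measure"
  assumes M: "prob_space M" "sets M = sets borel" and i: "i \<in> I"
  shows "measure (PiM I (\<lambda>_. M)) {x \<in> space (PiM I (\<lambda>_. M)). dist (x i) a \<le> r} = measure M (cball a r)"
proof -
  let ?P = "PiM I (\<lambda>_. M)"
  have "(\<lambda>x. x i) \<in> measurable ?P M" using i by measurable
  moreover have "cball a r \<in> sets M" using M(2) by auto
  ultimately show ?thesis
    using measure_distr[of "\<lambda>x. x i" ?P M "cball a r"] distr_PiM_component[of I "\<lambda>_. M" i] M(1) i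
    by (auto simp: vimage_def Int_def dist_commute conj_commute)
qed

lemma measure_PiM_some_close_pair_le:
  fixes M :: "'a :: {metric_space, second_countable_topology} measure"
  assumes M: "prob_space M" "sets M = sets borel" and ball: "\<And>a. measure M (cball a r) \<le> q"
  shows "measure (PiM {..<n} (\<lambda>_. M))
           {x \<in> space (PiM {..<n} (\<lambda>_. M)). \<exists>i<n. \<exists>j<n. i \<noteq> j \<and> dist (x i) (x j) \<le> r}
         \<le> real n ^ 2 * q"
proof -
  let ?P = "PiM {..<n} (\<lambda>_. M)"
  define IJ where "IJ = {(i, j). i < n \<and> j < n \<and> i \<noteq> j}"
  define close where "close = (\<lambda>(i, j). {x \<in> space ?P. dist (x i) (x j) \<le> r})"
  have IJ: "IJ \<subseteq> {..<n} \<times> {..<n}" unfolding IJ_def by auto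
  then have "finite IJ" by (rule finite_subset) auto
  have "{x \<in> space ?P. \<exists>i<n. \<exists>j<n. i \<noteq> j \<and> dist (x i) (x j) \<le> r} = (\<Union>p\<in>IJ. close p)"
    unfolding IJ_def close_def by auto
  also have "measure ?P \<dots> \<le> (\<Sum>p\<in>IJ. measure ?P (close p))"
    using \<open>finite IJ\<close> M by (intro measure_UNION_le) (auto simp: IJ_def close_def)
  also have "\<dots> \<le> real (card IJ) * q"
    by (intro sum_bounded_above) (auto simp: IJ_def close_def intro: measure_PiM_dist_coordinates_le[OF M ball])
  also have "\<dots> \<le> real n ^ 2 * q"
  proof (rule mult_right_mono)
    show "real (card IJ) \<le> real n ^ 2"
      using card_mono[OF _ IJ] by (simp add: card_cartesian_product power2_eq_square flip: of_nat_mult)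
    show "0 \<le> q" using ball[of undefined] measure_nonneg order_trans by blast
  qed
  finally show ?thesis .
qed

lemma measure_PiM_some_close_to_point_le:
  fixes M :: "'a :: metric_space measure"
  assumes M: "prob_space M" "sets M = sets borel" and ball: "\<And>a. measure M (cball a r) \<le> q"
    and "finite A"
  shows "measure (PiM {..<n} (\<lambda>_. M))
           {x \<in> space (PiM {..<n} (\<lambda>_. M)). \<exists>i<n. \<exists>a\<in>A. dist (x i) a \<le> r}
         \<le> real n * real (card A) * q"
proof -
  let ?P = "PiM {..<n} (\<lambda>_. M)"
  define close where "close = (\<lambda>(i, a). {x \<in> space ?P. dist (x i) a \<le> r})"
  have close_sets: "close (i, a) \<in> sets ?P" if "i < n" for i a
  proof -
    have "(\<lambda>x. x i) \<in> measurable ?P M" using that by (intro measurable_component_singleton) auto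
    moreover have "cball a r \<in> sets M" using M(2) by simp
    ultimately have "(\<lambda>x. x i) -` cball a r \<inter> space ?P \<in> sets ?P" by (rule measurable_sets)
    then show ?thesis by (simp add: close_def vimage_def Int_def dist_commute conj_commute)
  qed
  have "{x \<in> space ?P. \<exists>i<n. \<exists>a\<in>A. dist (x i) a \<le> r} = (\<Union>p\<in>{..<n} \<times> A. close p)"
    unfolding close_def by auto
  also have "measure ?P \<dots> \<le> (\<Sum>p\<in>{..<n} \<times> A. measure ?P (close p))"
    using \<open>finite A\<close> close_sets by (intro measure_UNION_le) auto
  also have "\<dots> \<le> real (card ({..<n} \<times> A)) * q"
    by (intro sum_bounded_above) (auto simp: close_def measure_PiM_dist_coordinate_le[OF M] ball)
  finally show ?thesis by (simp add: card_cartesian_product)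
qed

lemma max_one_nat_floor_le:
  assumes "1 \<le> x"
  shows "real (max 1 (nat \<lfloor>x\<rfloor>)) \<le> x"
proof -
  have "1 \<le> \<lfloor>x\<rfloor>" using assms by (simp add: le_floor_iff)
  then show ?thesis by (simp add: max_def of_nat_floor)
qed

lemma cells_side_le:
  assumes "0 \<le> \<beta>" "1 \<le> n"
  shows "real (cells_side \<beta> n) \<le> real n powr (\<beta> / 2)"
  unfolding cells_side_def using assms by (intro max_one_nat_floor_le ge_one_powr_ge_zero) auto

lemma num_antennas_le:
  assumes "0 \<le> \<gamma>" "1 \<le> n"
  shows "real (num_antennas \<gamma> n) \<le> real n powr \<gamma>"
  unfolding num_antennas_def using assms by (intro max_one_nat_floor_le ge_one_powr_ge_zero) auto

lemma boundary_antennas_eq_image: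
  "boundary_antennas \<beta> \<gamma> \<epsilon>0 \<theta> n =
     (\<lambda>(c, t). bs_center (cells_side \<beta> n) c + bs_radius \<beta> \<epsilon>0 n *\<^sub>R
        (cos (\<theta> n c + 2 * pi * real t / real (num_boundary_antennas \<beta> \<gamma> n)),
         sin (\<theta> n c + 2 * pi * real t / real (num_boundary_antennas \<beta> \<gamma> n))))
     ` (cells (cells_side \<beta> n) \<times> {..<num_boundary_antennas \<beta> \<gamma> n})"
  unfolding boundary_antennas_def by auto

lemma finite_boundary_antennas: "finite (boundary_antennas \<beta> \<gamma> \<epsilon>0 \<theta> n)"
  unfolding boundary_antennas_eq_image cells_def by auto

lemma card_boundary_antennas_le:
  "card (boundary_antennas \<beta> \<gamma> \<epsilon>0 \<theta> n) \<le> (cells_side \<beta> n)\<^sup>2 * num_boundary_antennas \<beta> \<gamma> n"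
proof -
  have "card (boundary_antennas \<beta> \<gamma> \<epsilon>0 \<theta> n)
          \<le> card (cells (cells_side \<beta> n) \<times> {..<num_boundary_antennas \<beta> \<gamma> n})"
    unfolding boundary_antennas_eq_image by (rule card_image_le) (simp add: cells_def)
  then show ?thesis by (simp add: cells_def card_cartesian_product power2_eq_square)
qed

text \<open>In the second case of the definition, m times sqrt(n/m) = sqrt(m n) \<le> n^((1+beta)/2).\<close>
lemma card_boundary_antennas_le_nodes:
  assumes "0 \<le> \<beta>" "\<beta> < 1" "0 \<le> \<gamma>" "\<beta> + \<gamma> \<le> 1" "1 \<le> n"
  shows "real (card (boundary_antennas \<beta> \<gamma> \<epsilon>0 \<theta> n)) \<le> real n"
proof -
  define k where "k = cells_side \<beta> n"
  define b where "b = num_boundary_antennas \<beta> \<gamma> n"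
  have k: "1 \<le> real k" "real k \<le> real n powr (\<beta> / 2)"
    using cells_side_le[OF assms(1,5)] by (auto simp: k_def cells_side_def)
  have "real (card (boundary_antennas \<beta> \<gamma> \<epsilon>0 \<theta> n)) \<le> real k * (real k * real b)"
    using card_boundary_antennas_le[of \<beta> \<gamma> \<epsilon>0 \<theta> n]
    unfolding k_def b_def power2_eq_square by (metis mult.assoc of_nat_le_iff of_nat_mult)
  also have "\<dots> \<le> real n"
  proof (cases "\<gamma> \<le> (1 - \<beta>) / 2")
    case True
    then have "real b \<le> real n powr \<gamma>"
      using num_antennas_le[OF assms(3,5)] by (simp add: b_def num_boundary_antennas_def)
    then have "real k * (real k * real b) \<le> real n powr (\<beta> / 2) * (real n powr (\<beta> / 2) * real n powr \<gamma>)"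
      using k by (intro mult_mono) auto
    also have "\<dots> = real n powr (\<beta> + \<gamma>)" by (simp flip: powr_add)
    also have "\<dots> \<le> real n powr 1" using assms by (intro powr_mono) auto
    finally show ?thesis using assms by simp
  next
    case False
    then have "real b \<le> sqrt (real n) / real k"
      using k by (simp add: b_def k_def num_boundary_antennas_def real_sqrt_divide)
    then have "real k * (real k * real b) \<le> real k * sqrt (real n)"
      using k by (simp add: mult_left_mono field_simps)
    also have "\<dots> \<le> real n powr (\<beta> / 2) * real n powr (1 / 2)"
      using k by (intro mult_mono) (auto simp: powr_half_sqrt)
    also have "\<dots> = real n powr ((\<beta> + 1) / 2)" by (simp flip: powr_add add: add_divide_distrib)
    also have "\<dots> \<le> real n powr 1" using assms by (intro powr_mono) auto
    finally show ?thesis using assms by simp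
  qed
  finally show ?thesis .
qed

lemma one_minus_four_square_pos: "0 < (\<epsilon>0 :: real) \<Longrightarrow> \<epsilon>0 < 1 / 2 \<Longrightarrow> 0 < 1 - 4 * \<epsilon>0\<^sup>2"
  using power_strict_mono[of \<epsilon>0 "1 / 2" 2] by (simp add: power2_eq_square)

lemma prob_space_node_law:
  assumes "0 < \<epsilon>0" "\<epsilon>0 < 1 / 2"
  shows "prob_space (uniform_measure lborel (node_region \<beta> \<epsilon>0 n))"
  using one_minus_four_square_pos[OF assms] measure_node_region_ge[of \<epsilon>0 \<beta> n] assms
  by (intro prob_space_uniform_measure_fmeasurable node_region_fmeasurable) auto

lemma measure_node_law_cball_le:
  assumes "0 < \<epsilon>0" "\<epsilon>0 < 1 / 2" "0 \<le> r"
  shows "measure (uniform_measure lborel (node_region \<beta> \<epsilon>0 n)) (cball a r) \<le> 4 * r\<^sup>2 / (1 - 4 * \<epsilon>0\<^sup>2)"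
  using one_minus_four_square_pos[OF assms(1,2)] measure_node_region_ge[of \<epsilon>0 \<beta> n] assms
  by (intro measure_uniform_cball_le node_region_fmeasurable) auto

lemma prob_space_nodes_law: "0 < \<epsilon>0 \<Longrightarrow> \<epsilon>0 < 1 / 2 \<Longrightarrow> prob_space (nodes_law \<beta> \<epsilon>0 n)"
  unfolding nodes_law_def by (intro prob_space_PiM prob_space_node_law) auto

lemma measure_good_event_ge:
  assumes "0 \<le> \<beta>" "\<beta> < 1" "0 \<le> \<gamma>" "\<beta> + \<gamma> \<le> 1" "0 < \<epsilon>0" "\<epsilon>0 < 1 / 2" "1 \<le> n"
  shows "1 - 8 / (1 - 4 * \<epsilon>0\<^sup>2) * real n ^ 2 * (1 / real n powr (1 + \<epsilon>1))\<^sup>2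
           \<le> measure (nodes_law \<beta> \<epsilon>0 n) (good_event \<beta> \<gamma> \<epsilon>0 \<epsilon>1 \<theta> n)"
proof -
  define U where "U = uniform_measure lborel (node_region \<beta> \<epsilon>0 n)"
  define r where "r = 1 / real n powr (1 + \<epsilon>1)"
  define q where "q = 4 * r\<^sup>2 / (1 - 4 * \<epsilon>0\<^sup>2)"
  define A where "A = boundary_antennas \<beta> \<gamma> \<epsilon>0 \<theta> n"
  let ?P = "PiM {..<n} (\<lambda>_. U)"
  define pairs where "pairs = {x \<in> space ?P. \<exists>i<n. \<exists>j<n. i \<noteq> j \<and> dist (x i) (x j) \<le> r}"
  define near_antenna where "near_antenna = {x \<in> space ?P. \<exists>i<n. \<exists>a\<in>A. dist (x i) a \<le> r}"
  have U: "prob_space U" "sets U = sets borel"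
    using prob_space_node_law[OF assms(5,6)] by (auto simp: U_def)
  have ball: "measure U (cball a r) \<le> q" for a
    unfolding U_def q_def by (rule measure_node_law_cball_le[OF assms(5,6)]) (simp add: r_def)
  have q: "0 \<le> q" using one_minus_four_square_pos[OF assms(5,6)] by (simp add: q_def)
  interpret P: prob_space ?P using U by (intro prob_space_PiM) auto
  have events: "pairs \<in> P.events" "near_antenna \<in> P.events"
    unfolding pairs_def near_antenna_def U_def A_def using finite_boundary_antennas by measurable
  have "P.prob pairs \<le> real n ^ 2 * q"
    unfolding pairs_def by (rule measure_PiM_some_close_pair_le[OF U ball])
  moreover have "P.prob near_antenna \<le> real n ^ 2 * q"
  proof -
    have "P.prob near_antenna \<le> real n * real (card A) * q"
      unfolding near_antenna_def A_def by (rule measure_PiM_some_close_to_point_le[OF U ball finite_boundary_antennas])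
    also have "\<dots> \<le> real n ^ 2 * q"
    proof (rule mult_right_mono)
      show "real n * real (card A) \<le> real n ^ 2"
        using card_boundary_antennas_le_nodes[OF assms(1-4,7)] by (simp add: A_def power2_eq_square mult_left_mono)
    qed (rule q)
    finally show ?thesis .
  qed
  moreover have "P.prob (pairs \<union> near_antenna) \<le> P.prob pairs + P.prob near_antenna"
    using events by (rule measure_Un_le)
  moreover have "good_event \<beta> \<gamma> \<epsilon>0 \<epsilon>1 \<theta> n = space ?P - (pairs \<union> near_antenna)"
    unfolding good_event_def nodes_law_def pairs_def near_antenna_def U_def A_def r_def by (auto simp: not_less) (meson not_le)+
  ultimately show ?thesis
    using P.prob_compl[of "pairs \<union> near_antenna"] events
    by (simp add: nodes_law_def U_def q_def r_def field_simps)
qed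

theorem lemma6:
  fixes \<beta> \<gamma> \<epsilon>0 \<epsilon>1 :: real and \<theta> :: "nat \<Rightarrow> nat \<times> nat \<Rightarrow> real"
  assumes "0 \<le> \<beta>" "\<beta> < 1" "0 \<le> \<gamma>" "\<gamma> < 1" "\<beta> + \<gamma> \<le> 1"
    and "0 < \<epsilon>0" "\<epsilon>0 < 1 / 2" and "0 < \<epsilon>1"
  shows "(\<lambda>n. measure (nodes_law \<beta> \<epsilon>0 n) (good_event \<beta> \<gamma> \<epsilon>0 \<epsilon>1 \<theta> n)) \<longlonglongrightarrow> 1"
proof (rule tendsto_sandwich)
  define K where "K = 8 / (1 - 4 * \<epsilon>0\<^sup>2)"
  show "\<forall>\<^sub>F n in sequentially. 1 - K * real n ^ 2 * (1 / real n powr (1 + \<epsilon>1))\<^sup>2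
          \<le> measure (nodes_law \<beta> \<epsilon>0 n) (good_event \<beta> \<gamma> \<epsilon>0 \<epsilon>1 \<theta> n)"
    using eventually_ge_at_top[of 1]
    by eventually_elim (use measure_good_event_ge assms in \<open>simp add: K_def\<close>)
  show "\<forall>\<^sub>F n in sequentially. measure (nodes_law \<beta> \<epsilon>0 n) (good_event \<beta> \<gamma> \<epsilon>0 \<epsilon>1 \<theta> n) \<le> 1"
    using prob_space_nodes_law[OF assms(6,7)] by (simp add: prob_space.prob_le_1)
  show "(\<lambda>n. 1 - K * real n ^ 2 * (1 / real n powr (1 + \<epsilon>1))\<^sup>2) \<longlonglongrightarrow> 1"
    using \<open>0 < \<epsilon>1\<close> by real_asymp
qed (rule tendsto_const)

end
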